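(* Let $d>2$ and $k$ be positive integers and let $p$ be the smallest positive integer such that $k<\kappa_p$. Assume $d$ divides $p$. If (i) $k-\kappa_{p-1}\neq p/d$ and (ii) $\kappa_p-k\neq p/d$, then there exists a subset $\mathcal{X}$ of $\mathbb{P}^d_\circ$ with $\kappa(\mathcal{X})\le k$ and $|\mathcal{X}|=\lfloor\lambda(d,k)\rfloor$. Otherwise, there exists a subset $\mathcal{X}$ of $\mathbb{P}^d_\circ$ with $\kappa(\mathcal{X})\le k$ and $|\mathcal{X}|=\lfloor\lambda(d,k)\rfloor-1$.
   Context: A point of $\mathbb{Z}^d$ is primitive if its coordinates are relatively prime; $\mathbb{P}^d_\circ$ denotes the set of primitive points of $\mathbb{Z}^d$ whose first non-zero coordinate is positive. For a finite $\mathcal{X}\subset\mathbb{R}^d$, $\kappa(\mathcal{X})=\max_{1\le i\le d}\sum_{x\in\mathcal{X}}|x_i|$. $B(d,p)=\{x\in\mathbb{R}^d:\|x\|_1\le p\}$; $N_p=|B(d,p)\cap\mathbb{P}^d_\circ|$ and $\kappa_p=\kappa(B(d,p)\cap\mathbb{P}^d_\circ)$ (with $N_0=\kappa_0=0$). With $p$ as in the claim, $\lambda(d,k)=N_{p-1}+\frac{d(k-\kappa_{p-1})}{p}$. *)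

theory Defs
  imports Main "HOL-Library.Library" Complex_Main
begin

text \<open>Points of Z^d are represented as functions nat => int vanishing outside {..<d}.\<close>

definition prim_pts :: "nat \<Rightarrow> (nat \<Rightarrow> int) set" where
  "prim_pts d = {x. (\<forall>i\<ge>d. x i = 0) \<and> Gcd (x ` {..<d}) = 1 \<and>
                    (\<exists>j<d. 0 < x j \<and> (\<forall>i<j. x i = 0))}"

definition kappa :: "nat \<Rightarrow> (nat \<Rightarrow> int) set \<Rightarrow> int" where
  "kappa d X = (MAX i\<in>{..<d}. \<Sum>x\<in>X. \<bar>x i\<bar>)"

definition l1norm :: "nat \<Rightarrow> (nat \<Rightarrow> int) \<Rightarrow> int" where
  "l1norm d x = (\<Sum>i<d. \<bar>x i\<bar>)"

definition ball_prim :: "nat \<Rightarrow> nat \<Rightarrow> (nat \<Rightarrow> int) set" where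
  "ball_prim d p = {x \<in> prim_pts d. l1norm d x \<le> int p}"

definition N_p :: "nat \<Rightarrow> nat \<Rightarrow> nat" where
  "N_p d p = card (ball_prim d p)"

definition kappa_p :: "nat \<Rightarrow> nat \<Rightarrow> int" where
  "kappa_p d p = kappa d (ball_prim d p)"

definition lam :: "nat \<Rightarrow> nat \<Rightarrow> nat \<Rightarrow> real" where
  "lam d k p = real (N_p d (p - 1)) + real d * (real k - real_of_int (kappa_p d (p - 1))) / real p"

end

theory Submission
  imports Defs
begin

text \<open>
  Write p = d q and let S be the set of primitive points of l1-norm exactly p, so that the
  ball of radius p is the ball of radius p - 1 plus S. Shifting coordinates cyclically (and
  flipping the sign if the leading coordinate becomes negative) permutes S with period d,
  hence every shift-invariant subset Y of S is balanced: all d column sums of Y equal |Y| q.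
  In particular kappa_p = kappa_(p-1) + |S| q, and with r = k - kappa_(p-1) the bound
  floor(lambda(d,k)) is N_(p-1) + floor(r/q). So it suffices to add to the ball of radius
  p - 1 a set of floor(r/q) points of S whose column sums are at most r.

  Balanced subsets of S exist in every size from 2 to |S| - 2: the points
  q(1,...,1) + e_a - e_b form a shift-invariant part of S in which a subset is balanced as
  soon as its index pairs (a, b) form a circulation, and 2-cycles together with one 3-cycle
  realise every small size; the shift orbits of the remaining points fill in the larger
  sizes. Sizes 1 and |S| - 1 are realised by one such point or by its complement, whose
  column sums exceed the balanced value by at most one. This needs r > q resp.
  r > (|S| - 1) q, which fails exactly in the exceptional cases, where one point less is
  taken.
\<close>

section \<open>Orbits of a periodic injection\<close>

lemma funpow_orbit_invariant:
  assumes "0 < c" and "(f ^^ c) x = x"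
  shows "f ` (\<lambda>j. (f ^^ j) x) ` {..<c} \<subseteq> (\<lambda>j. (f ^^ j) x) ` {..<c}"
proof clarify
  fix j assume "j < c"
  show "f ((f ^^ j) x) \<in> (\<lambda>j. (f ^^ j) x) ` {..<c}"
  proof (cases "Suc j < c")
    case True
    then show ?thesis by (auto intro!: image_eqI[where x = "Suc j"])
  next
    case False
    then have "Suc j = c" using \<open>j < c\<close> by simp
    have "f ((f ^^ j) x) = (f ^^ Suc j) x" by simp
    also have "\<dots> = (f ^^ 0) x" using \<open>Suc j = c\<close> assms(2) by simp
    finally show ?thesis using \<open>0 < c\<close> by blast
  qed
qed

lemma funpow_orbit_disjoint:
  assumes "(f ^^ c) x = x" and "f ` R \<subseteq> R" and "x \<notin> R"
  shows "(\<lambda>j. (f ^^ j) x) ` {..<c} \<inter> R = {}"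
proof -
  have "(f ^^ i) y \<in> R" if "y \<in> R" for i y
    using that assms(2) by (induction i) auto
  moreover have "(f ^^ (c - j)) ((f ^^ j) x) = x" if "j < c" for j
    using that assms(1) by (simp flip: funpow_add[unfolded o_def, THEN fun_cong])
  ultimately show ?thesis using assms(3) by (metis (no_types, lifting) disjoint_iff imageE lessThan_iff)
qed

lemma invariant_Diff:
  assumes "finite B" "B \<subseteq> A" "f ` A \<subseteq> A" "f ` B \<subseteq> B" "inj_on f A"
  shows "f ` (A - B) \<subseteq> A - B"
proof -
  have "f ` B = B" using endo_inj_surj[OF assms(1,4) inj_on_subset[OF assms(5,2)]] .
  moreover have "y \<in> B" if "y \<in> A" "f y \<in> f ` B" for y
    using that assms(2,5) by (auto simp: inj_on_def)
  ultimately show ?thesis using assms(3) by blast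
qed

lemma obtain_invariant_orbit:
  assumes "finite A" "f ` A \<subseteq> A" "inj_on f A" "x \<in> A"
    and "0 < c" "(f ^^ c) x = x" and "f ` R \<subseteq> R" "x \<notin> R"
  obtains Orb where "x \<in> Orb" "Orb \<subseteq> A" "card Orb \<le> c" "f ` Orb \<subseteq> Orb" "Orb \<inter> R = {}"
    "f ` (A - Orb) \<subseteq> A - Orb"
proof
  let ?Orb = "(\<lambda>j. (f ^^ j) x) ` {..<c}"
  show "x \<in> ?Orb" using \<open>0 < c\<close> by force
  have "(f ^^ j) x \<in> A" for j using assms(2,4) by (induction j) auto
  then show "?Orb \<subseteq> A" by blast
  show "card ?Orb \<le> c" using card_image_le[of "{..<c}"] by simp
  show "f ` ?Orb \<subseteq> ?Orb" using assms(5,6) by (rule funpow_orbit_invariant)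
  show "?Orb \<inter> R = {}" using assms(6-8) by (rule funpow_orbit_disjoint)
  show "f ` (A - ?Orb) \<subseteq> A - ?Orb"
    using \<open>?Orb \<subseteq> A\<close> \<open>f ` ?Orb \<subseteq> ?Orb\<close> assms(2,3) by (intro invariant_Diff) auto
qed

lemma subsets_of_all_sizes_Un:
  assumes "finite B" "finite Z" "B \<inter> Z = {}" "card Z + 3 \<le> card B"
    and Un_P: "\<And>Y. Y \<subseteq> B \<Longrightarrow> P Y \<Longrightarrow> P (Y \<union> Z)"
    and sizes: "\<And>m. 2 \<le> m \<Longrightarrow> m + 2 \<le> card B \<Longrightarrow> \<exists>Y\<subseteq>B. card Y = m \<and> P Y"
    and m: "2 \<le> m" "m + 2 \<le> card (B \<union> Z)"
  shows "\<exists>Y\<subseteq>B \<union> Z. card Y = m \<and> P Y"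
proof (cases "m + 2 \<le> card B")
  case True
  then show ?thesis using sizes m(1) by blast
next
  case False
  have "card (B \<union> Z) = card B + card Z" using assms(1-3) by (rule card_Un_disjoint)
  then have "2 \<le> m - card Z" "m - card Z + 2 \<le> card B"
    using False assms(4) m by linarith+
  then obtain Y where Y: "Y \<subseteq> B" "card Y = m - card Z" "P Y" using sizes by blast
  moreover have "card (Y \<union> Z) = m"
    using Y(1,2) assms(1-3) \<open>2 \<le> m - card Z\<close> finite_subset
    by (subst card_Un_disjoint) auto
  ultimately show ?thesis using Un_P by (intro exI[of _ "Y \<union> Z"]) auto
qed

lemma subsets_of_all_sizes_extend_by_orbits:
  fixes f :: "'a \<Rightarrow> 'a" and P :: "'a set \<Rightarrow> bool"
  assumes A0: "finite A0" "inj_on f A0"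
    and period: "0 < c" "\<And>x. x \<in> A0 \<Longrightarrow> (f ^^ c) x = x"
    and R: "f ` R \<subseteq> R" "c + 3 \<le> card R"
    and invariant_P: "\<And>Y. Y \<subseteq> A0 \<Longrightarrow> f ` Y \<subseteq> Y \<Longrightarrow> P Y"
    and Un_P: "\<And>Y Z. Y \<subseteq> A0 \<Longrightarrow> Z \<subseteq> A0 \<Longrightarrow> Y \<inter> Z = {} \<Longrightarrow> P Y \<Longrightarrow> P Z \<Longrightarrow> P (Y \<union> Z)"
    and base: "\<And>m. 2 \<le> m \<Longrightarrow> m + 2 \<le> card R \<Longrightarrow> \<exists>Y\<subseteq>R. card Y = m \<and> P Y"
    and A: "R \<subseteq> A" "A \<subseteq> A0" "f ` A \<subseteq> A"
  shows "2 \<le> m \<Longrightarrow> m + 2 \<le> card A \<Longrightarrow> \<exists>Y\<subseteq>A. card Y = m \<and> P Y"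
  using A
proof (induction "card (A - R)" arbitrary: A m rule: less_induct)
  case less
  have "finite A" using less.prems(4) A0(1) finite_subset by blast
  show ?case
  proof (cases "A = R")
    case True
    then show ?thesis using less.prems base by blast
  next
    case False
    then obtain x where x: "x \<in> A" "x \<notin> R" using less.prems(3) by blast
    obtain Orb where Orb: "x \<in> Orb" "Orb \<subseteq> A" "card Orb \<le> c" "f ` Orb \<subseteq> Orb" "Orb \<inter> R = {}"
        "f ` (A - Orb) \<subseteq> A - Orb"
      using obtain_invariant_orbit[OF \<open>finite A\<close> less.prems(5) inj_on_subset[OF A0(2) less.prems(4)]
          x(1) \<open>0 < c\<close> period(2) R(1) x(2)] x(1) less.prems(4) by blast
    have A': "R \<subseteq> A - Orb" "A - Orb \<subseteq> A0" "f ` (A - Orb) \<subseteq> A - Orb"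
      using less.prems(3,4) Orb(5,6) by auto
    have "card (A - Orb - R) < card (A - R)"
      using \<open>finite A\<close> Orb(1) x by (intro psubset_card_mono) auto
    note sizes = less.hyps[OF this _ _ A']
    have "card R \<le> card (A - Orb)" using A'(1) \<open>finite A\<close> by (intro card_mono) auto
    then have card_Orb: "card Orb + 3 \<le> card (A - Orb)" using Orb(3) R(2) by linarith
    have "Orb \<subseteq> A0" using Orb(2) less.prems(4) by (rule order_trans)
    then have "P Orb" using Orb(4) by (rule invariant_P)
    have Un_Orb: "P (Y \<union> Orb)" if "Y \<subseteq> A - Orb" "P Y" for Y
      by (rule Un_P) (use that A'(2) \<open>Orb \<subseteq> A0\<close> \<open>P Orb\<close> in auto)
    have "finite Orb" using Orb(2) \<open>finite A\<close> by (rule finite_subset)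
    have "\<exists>Y\<subseteq>A - Orb \<union> Orb. card Y = m \<and> P Y"
      using less.prems(2) Orb(2) \<open>finite A\<close>
      by (intro subsets_of_all_sizes_Un[OF _ \<open>finite Orb\<close> _ card_Orb Un_Orb sizes less.prems(1)])
         (auto simp: Un_absorb2)
    then show ?thesis using Orb(2) by (simp add: Un_absorb2)
  qed
qed

section \<open>Cyclic rotation of primitive points\<close>

definition coord_rot :: "nat \<Rightarrow> (nat \<Rightarrow> int) \<Rightarrow> nat \<Rightarrow> int" where
  "coord_rot d x = (\<lambda>i. if i < d then x ((i + d - 1) mod d) else 0)"

definition lead_pos :: "nat \<Rightarrow> (nat \<Rightarrow> int) \<Rightarrow> bool" where
  "lead_pos d x \<longleftrightarrow> (\<exists>j<d. 0 < x j \<and> (\<forall>i<j. x i = 0))"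

definition sign_norm :: "nat \<Rightarrow> (nat \<Rightarrow> int) \<Rightarrow> nat \<Rightarrow> int" where
  "sign_norm d x = (if lead_pos d x then x else - x)"

definition prim_rot :: "nat \<Rightarrow> (nat \<Rightarrow> int) \<Rightarrow> nat \<Rightarrow> int" where
  "prim_rot d x = sign_norm d (coord_rot d x)"

lemma pred_mod_eq: "i < (d::nat) \<Longrightarrow> (i + d - 1) mod d = (if i = 0 then d - 1 else i - 1)"
  by (cases i) (auto simp: mod_if)

lemma bij_betw_pred_mod: "0 < (d::nat) \<Longrightarrow> bij_betw (\<lambda>i. (i + d - 1) mod d) {..<d} {..<d}"
  by (rule bij_betw_byWitness[where f' = "\<lambda>i. Suc i mod d"]) (auto simp: pred_mod_eq[simplified] mod_Suc)

lemma sum_pred_mod: "0 < (d::nat) \<Longrightarrow> (\<Sum>i<d. g ((i + d - 1) mod d)) = (\<Sum>i<d. g i)"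
  using sum.reindex_bij_betw[OF bij_betw_pred_mod] by blast

lemma image_coord_rot:
  assumes "0 < d" shows "coord_rot d x ` {..<d} = x ` {..<d}"
proof -
  have "coord_rot d x ` {..<d} = x ` (\<lambda>i. (i + d - 1) mod d) ` {..<d}"
    by (auto simp: coord_rot_def image_image)
  then show ?thesis
    using bij_betw_imp_surj_on[OF bij_betw_pred_mod[OF assms]] by simp
qed

lemma prim_pts_iff:
  "x \<in> prim_pts d \<longleftrightarrow> (\<forall>i\<ge>d. x i = 0) \<and> Gcd (x ` {..<d}) = 1 \<and> lead_pos d x"
  unfolding prim_pts_def lead_pos_def by blast

lemma lead_pos_uminus:
  assumes "\<exists>j<d. y j \<noteq> 0"
  shows "lead_pos d (- y) \<longleftrightarrow> \<not> lead_pos d y"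
proof -
  define j where "j = (LEAST j. y j \<noteq> 0)"
  have "y j \<noteq> 0" and "j < d" and below: "\<forall>i<j. y i = 0"
    using assms LeastI_ex[of "\<lambda>j. y j \<noteq> 0"] Least_le[of "\<lambda>j. y j \<noteq> 0"] not_less_Least
    unfolding j_def by (fastforce, fastforce, blast)
  have "lead_pos d z \<longleftrightarrow> 0 < z j" if "\<forall>i. z i = 0 \<longleftrightarrow> y i = 0" for z
    unfolding lead_pos_def
    by (metis \<open>j < d\<close> \<open>y j \<noteq> 0\<close> below that linorder_neqE_nat order.strict_iff_not)
  then show ?thesis using \<open>y j \<noteq> 0\<close> by (auto simp: neg_less_0_iff_less)
qed

lemma lead_pos_nonneg: "\<forall>i<d. 0 \<le> x i \<Longrightarrow> \<exists>j<d. x j \<noteq> 0 \<Longrightarrow> lead_pos d x"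
  using lead_pos_uminus[of d x] unfolding lead_pos_def by force

lemma sign_norm_cases: "sign_norm d y = y \<or> sign_norm d y = - y"
  unfolding sign_norm_def by auto

lemma abs_prim_rot: "i < d \<Longrightarrow> \<bar>prim_rot d x i\<bar> = \<bar>x ((i + d - 1) mod d)\<bar>"
  using sign_norm_cases[of d "coord_rot d x"]
  by (auto simp: prim_rot_def coord_rot_def)

lemma prim_rot_in_prim_pts:
  assumes "0 < d" and x: "x \<in> prim_pts d"
  shows "prim_rot d x \<in> prim_pts d"
proof -
  have rot_img: "coord_rot d x ` {..<d} = x ` {..<d}" by (rule image_coord_rot[OF \<open>0 < d\<close>])
  have "Gcd (prim_rot d x ` {..<d}) = 1"
  proof (cases "prim_rot d x = coord_rot d x")
    case True
    then show ?thesis using x rot_img by (simp add: prim_pts_iff)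
  next
    case False
    then have "prim_rot d x ` {..<d} = uminus ` coord_rot d x ` {..<d}"
      using sign_norm_cases[of d "coord_rot d x"] by (auto simp: prim_rot_def)
    then show ?thesis using x rot_img by (simp add: prim_pts_iff)
  qed
  moreover obtain j where "j < d" "x j \<noteq> 0"
    using x by (auto simp: prim_pts_def)
  then have "\<exists>j<d. coord_rot d x j \<noteq> 0"
    using rot_img by (metis imageE image_eqI lessThan_iff)
  then have "lead_pos d (prim_rot d x)"
    using lead_pos_uminus by (auto simp: prim_rot_def sign_norm_def)
  moreover have "\<forall>i\<ge>d. prim_rot d x i = 0"
    using sign_norm_cases[of d "coord_rot d x"] by (auto simp: prim_rot_def coord_rot_def)
  ultimately show ?thesis by (simp add: prim_pts_iff)
qed

lemma l1norm_prim_rot: "0 < d \<Longrightarrow> l1norm d (prim_rot d x) = l1norm d x"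
  by (simp add: l1norm_def abs_prim_rot sum_pred_mod[where g = "\<lambda>i. \<bar>x i\<bar>", simplified])

lemma funpow_coord_rot:
  assumes "0 < d" and "\<forall>i\<ge>d. x i = 0"
  shows "(coord_rot d ^^ j) x = (\<lambda>i. if i < d then x ((i + j * (d - 1)) mod d) else 0)"
proof (induction j)
  case 0
  show ?case using assms(2) by auto
next
  case (Suc j)
  have "((i + d - 1) mod d + j * (d - 1)) mod d = (i + Suc j * (d - 1)) mod d" for i
    using \<open>0 < d\<close> by (simp add: mod_add_left_eq add.assoc)
  then show ?case using Suc \<open>0 < d\<close> by (auto simp: coord_rot_def)
qed

lemma funpow_prim_rot_cases:
  "(prim_rot d ^^ j) x = (coord_rot d ^^ j) x \<or> (prim_rot d ^^ j) x = - (coord_rot d ^^ j) x"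
proof (induction j)
  case (Suc j)
  define y where "y = (coord_rot d ^^ j) x"
  have "(prim_rot d ^^ Suc j) x = prim_rot d ((prim_rot d ^^ j) x)" by simp
  with Suc.IH have "(prim_rot d ^^ Suc j) x \<in> {prim_rot d y, prim_rot d (- y)}"
    unfolding y_def by (metis insert_iff)
  moreover have "coord_rot d (- y) = - coord_rot d y" by (auto simp: coord_rot_def)
  ultimately have "(prim_rot d ^^ Suc j) x \<in> {sign_norm d (coord_rot d y), sign_norm d (- coord_rot d y)}"
    by (simp add: prim_rot_def)
  then show ?case
    using sign_norm_cases[of d "coord_rot d y"] sign_norm_cases[of d "- coord_rot d y"]
    by (auto simp: y_def)
qed simp

lemma funpow_prim_rot_period:
  assumes "0 < d" and x: "x \<in> prim_pts d"
  shows "(prim_rot d ^^ d) x = x"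
proof -
  have "(i + d * (d - 1)) mod d = i" if "i < d" for i using that by simp
  then have "(coord_rot d ^^ d) x = x"
    using x funpow_coord_rot[OF \<open>0 < d\<close>, of x d] by (auto simp: prim_pts_def)
  moreover have "(prim_rot d ^^ j) x \<in> prim_pts d" for j
    using x by (induction j) (auto intro: prim_rot_in_prim_pts[OF \<open>0 < d\<close>])
  then have "lead_pos d ((prim_rot d ^^ d) x)" by (simp add: prim_pts_iff)
  moreover have "lead_pos d x" using x by (simp add: prim_pts_iff)
  moreover have "\<exists>j<d. x j \<noteq> 0" using x by (auto simp: prim_pts_def)
  ultimately show ?thesis
    using funpow_prim_rot_cases[of d d x] lead_pos_uminus[of d x] by auto
qed

lemma inj_on_prim_rot: "0 < d \<Longrightarrow> inj_on (prim_rot d) (prim_pts d)"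
  by (rule inj_on_inverseI[where g = "prim_rot d ^^ (d - 1)"])
     (metis funpow_prim_rot_period Suc_diff_1 funpow_Suc_right o_apply)

section \<open>Primitive spheres and balanced sets\<close>

definition sphere_prim :: "nat \<Rightarrow> nat \<Rightarrow> (nat \<Rightarrow> int) set" where
  "sphere_prim d p = {x \<in> prim_pts d. l1norm d x = int p}"

lemma finite_ball_prim: "finite (ball_prim d p)"
proof -
  let ?box = "{x. \<forall>i. (i \<in> {..<d} \<longrightarrow> x i \<in> {- int p..int p}) \<and> (i \<notin> {..<d} \<longrightarrow> x i = 0)}"
  have "x \<in> ?box" if x: "x \<in> ball_prim d p" for x
  proof -
    have "\<bar>x i\<bar> \<le> int p" if "i < d" for i
    proof -
      have "\<bar>x i\<bar> \<le> l1norm d x"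
        unfolding l1norm_def using that by (intro member_le_sum) auto
      then show ?thesis using x by (simp add: ball_prim_def)
    qed
    then show ?thesis using x by (force simp: ball_prim_def prim_pts_def abs_le_iff)
  qed
  moreover have "finite ?box" by (rule finite_set_of_finite_funs) auto
  ultimately show ?thesis by (meson finite_subset subsetI)
qed

lemma sphere_prim_subset_ball: "sphere_prim d p \<subseteq> ball_prim d p"
  by (auto simp: sphere_prim_def ball_prim_def)

lemma finite_sphere_prim: "finite (sphere_prim d p)"
  using finite_subset[OF sphere_prim_subset_ball finite_ball_prim] .

lemma ball_prim_eq_Un_sphere:
  assumes "0 < p"
  shows "ball_prim d p = ball_prim d (p - 1) \<union> sphere_prim d p"
    and "ball_prim d (p - 1) \<inter> sphere_prim d p = {}"
  using assms by (auto simp: ball_prim_def sphere_prim_def)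

lemma prim_rot_sphere_prim: "0 < d \<Longrightarrow> prim_rot d ` sphere_prim d p \<subseteq> sphere_prim d p"
  by (auto simp: sphere_prim_def prim_rot_in_prim_pts l1norm_prim_rot)

definition col_sum :: "(nat \<Rightarrow> int) set \<Rightarrow> nat \<Rightarrow> int" where
  "col_sum X i = (\<Sum>x\<in>X. \<bar>x i\<bar>)"

lemma kappa_eq_Max_col_sum: "kappa d X = Max (col_sum X ` {..<d})"
  by (simp add: kappa_def col_sum_def)

definition balanced :: "nat \<Rightarrow> nat \<Rightarrow> (nat \<Rightarrow> int) set \<Rightarrow> bool" where
  "balanced d q Y \<longleftrightarrow> (\<forall>i<d. col_sum Y i = int (card Y) * int q)"

lemma col_sum_Un:
  assumes "finite X" "finite Y" "X \<inter> Y = {}"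
  shows "col_sum (X \<union> Y) i = col_sum X i + col_sum Y i"
  using assms by (simp add: col_sum_def sum.union_disjoint)

lemma balanced_Un:
  assumes "finite X" "finite Y" "X \<inter> Y = {}" "balanced d q X" "balanced d q Y"
  shows "balanced d q (X \<union> Y)"
  using assms by (simp add: balanced_def col_sum_Un card_Un_disjoint algebra_simps)

lemma balanced_if_prim_rot_invariant:
  assumes "0 < d" and "finite A" and A: "A \<subseteq> sphere_prim d (d * q)" and inv: "prim_rot d ` A \<subseteq> A"
  shows "balanced d q A"
proof -
  have inj: "inj_on (prim_rot d) A"
    using inj_on_subset[OF inj_on_prim_rot[OF \<open>0 < d\<close>]] A by (auto simp: sphere_prim_def)
  have "prim_rot d ` A = A" by (rule endo_inj_surj[OF \<open>finite A\<close> inv inj])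
  then have shift: "col_sum A i = col_sum A ((i + d - 1) mod d)" if "i < d" for i
    using sum.reindex[OF inj, of "\<lambda>y. \<bar>y i\<bar>"] abs_prim_rot[OF that] by (simp add: col_sum_def)
  define c where "c = col_sum A 0"
  have const: "col_sum A i = c" if "i < d" for i
    using that
  proof (induction i)
    case (Suc i)
    then show ?case using shift[OF Suc.prems] by simp
  qed (simp add: c_def)
  have "int d * c = (\<Sum>i<d. col_sum A i)" by (simp add: const)
  also have "\<dots> = (\<Sum>x\<in>A. l1norm d x)" unfolding col_sum_def l1norm_def by (rule sum.swap)
  also have "\<dots> = int d * (int (card A) * int q)" using A by (simp add: sphere_prim_def subset_iff)
  finally show ?thesis using \<open>0 < d\<close> const by (simp add: balanced_def)
qed

lemma kappa_Un_balanced: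
  assumes "0 < d" "finite X" "finite Y" "X \<inter> Y = {}" "balanced d q Y"
  shows "kappa d (X \<union> Y) = kappa d X + int (card Y) * int q"
proof -
  have "kappa d (X \<union> Y) = Max ((\<lambda>i. col_sum X i + int (card Y) * int q) ` {..<d})"
    unfolding kappa_eq_Max_col_sum using assms
    by (intro arg_cong[where f = Max] image_cong) (auto simp: col_sum_Un balanced_def)
  also have "\<dots> = kappa d X + int (card Y) * int q"
    unfolding kappa_eq_Max_col_sum using \<open>0 < d\<close> by (intro Max_add_commute) auto
  finally show ?thesis .
qed

section \<open>Circulations\<close>

definition offdiag :: "nat \<Rightarrow> (nat \<times> nat) set" where
  "offdiag d = {(a, b). a < d \<and> b < d \<and> a \<noteq> b}"

definition circulation :: "(nat \<times> nat) set \<Rightarrow> bool" where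
  "circulation E \<longleftrightarrow> (\<forall>i. (\<Sum>(a, b)\<in>E. of_bool (a = i) - of_bool (b = i) :: int) = 0)"

lemma finite_offdiag: "finite (offdiag d)"
  by (rule finite_subset[of _ "{..<d} \<times> {..<d}"]) (auto simp: offdiag_def)

lemma card_offdiag: "card (offdiag d) = d * (d - 1)"
proof -
  have "offdiag d = {..<d} \<times> {..<d} - (\<lambda>a. (a, a)) ` {..<d}"
    by (auto simp: offdiag_def)
  moreover have "card ((\<lambda>a. (a, a)) ` {..<d}) = d"
    by (simp add: card_image inj_on_def)
  ultimately show ?thesis
    by (simp add: card_Diff_subset card_cartesian_product diff_mult_distrib2 image_subset_iff)
qed

lemma circulation_Un:
  assumes "finite E" "finite F" "E \<inter> F = {}" "circulation E" "circulation F"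
  shows "circulation (E \<union> F)"
  using assms by (simp add: circulation_def sum.union_disjoint)

lemma circulation_swap_closure:
  assumes "finite F" and "F \<inter> prod.swap ` F = {}"
  shows "circulation (F \<union> prod.swap ` F)" and "card (F \<union> prod.swap ` F) = 2 * card F"
proof -
  have "(\<Sum>(a, b)\<in>prod.swap ` F. of_bool (a = i) - of_bool (b = i) :: int)
      = - (\<Sum>(a, b)\<in>F. of_bool (a = i) - of_bool (b = i))" for i
    by (simp add: sum.reindex case_prod_beta sum_negf[symmetric])
  then show "circulation (F \<union> prod.swap ` F)"
    using assms by (simp add: circulation_def sum.union_disjoint)
  show "card (F \<union> prod.swap ` F) = 2 * card F"
    using assms by (simp add: card_Un_disjoint card_image)
qed

lemma circulation_triangle: "circulation {(0, 1), (1, 2), (2, 0)}"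
  by (simp add: circulation_def)

lemma circulations_of_every_size:
  assumes "3 \<le> d" and "2 \<le> m" and "m + 2 \<le> d * (d - 1)"
  shows "\<exists>E\<subseteq>offdiag d. card E = m \<and> circulation E"
proof -
  define U where "U = {(a, b). a < b \<and> b < d}"
  have "finite U" by (rule finite_subset[of _ "{..<d} \<times> {..<d}"]) (auto simp: U_def)
  have U_swap: "U \<inter> prod.swap ` U = {}" "U \<union> prod.swap ` U = offdiag d"
    by (auto simp: U_def offdiag_def image_iff)
  then have "2 * card U = d * (d - 1)"
    using circulation_swap_closure(2)[OF \<open>finite U\<close>] card_offdiag by metis
  then have card_U: "m + 2 \<le> 2 * card U" using assms(3) by simp
  have pairs: "\<exists>E\<subseteq>offdiag d. card E = 2 * card F \<and> circulation E \<and> E \<inter> T = {}"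
    if "F \<subseteq> U" and "F \<inter> T = {}" and "prod.swap ` F \<inter> T = {}" for F T
  proof -
    have "finite F" using that(1) \<open>finite U\<close> finite_subset by blast
    moreover have "F \<inter> prod.swap ` F = {}" using that(1) U_swap(1) by blast
    ultimately have "circulation (F \<union> prod.swap ` F)" "card (F \<union> prod.swap ` F) = 2 * card F"
      by (rule circulation_swap_closure)+
    moreover have "F \<union> prod.swap ` F \<subseteq> offdiag d" using that(1) U_swap(2) by blast
    ultimately show ?thesis using that(2,3) by (intro exI[of _ "F \<union> prod.swap ` F"]) blast
  qed
  show ?thesis
  proof (cases "even m")
    case True
    then obtain j where "m = 2 * j" by blast
    moreover have "j \<le> card U" using card_U \<open>m = 2 * j\<close> by linarith
    then obtain F where "F \<subseteq> U" "card F = j" by (rule obtain_subset_with_card_n)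
    ultimately show ?thesis using pairs[of F "{}"] by auto
  next
    case False
    define T where "T = {(0, 1), (1, 2), (2, 0) :: nat \<times> nat}"
    define U' where "U' = U - {(0, 1), (1, 2), (0, 2)}"
    have "{(0, 1), (1, 2), (0, 2)} \<subseteq> U" using assms(1) by (auto simp: U_def)
    then have "card U' = card U - 3" using \<open>finite U\<close> by (simp add: U'_def card_Diff_subset)
    have "\<exists>j. m = 2 * j + 3" using False assms(2) by presburger
    then obtain j where j: "m = 2 * j + 3" by blast
    have "j \<le> card U'" using card_U \<open>card U' = card U - 3\<close> unfolding j by presburger
    then obtain F where "F \<subseteq> U'" "card F = j" by (rule obtain_subset_with_card_n)
    then have F: "F \<subseteq> U'" "2 * card F + 3 = m" using j by simp_all
    obtain E where E: "E \<subseteq> offdiag d" "card E = 2 * card F" "circulation E" "E \<inter> T = {}"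
      using pairs[of F T] F(1) by (force simp: U'_def U_def T_def)
    have "T \<subseteq> offdiag d" using assms(1) by (auto simp: T_def offdiag_def)
    moreover have "finite E" using finite_subset[OF E(1) finite_offdiag] .
    then have "card (T \<union> E) = m" using E F(2) by (simp add: card_Un_disjoint T_def)
    moreover have "circulation (T \<union> E)"
      using circulation_Un[OF \<open>finite E\<close> _ E(4) E(3) circulation_triangle[folded T_def]]
      by (simp add: T_def Un_commute)
    ultimately show ?thesis using E(1) by (intro exI[of _ "T \<union> E"]) auto
  qed
qed

section \<open>The points q (1, ..., 1) + e_a - e_b\<close>

definition tilt :: "nat \<Rightarrow> nat \<Rightarrow> nat \<times> nat \<Rightarrow> nat \<Rightarrow> int" where
  "tilt d q e = (\<lambda>i. if i < d then int q + of_bool (i = fst e) - of_bool (i = snd e) else 0)"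

lemma tilt_nonneg: "1 \<le> q \<Longrightarrow> 0 \<le> tilt d q e i"
  by (simp add: tilt_def)

lemma abs_tilt: "1 \<le> q \<Longrightarrow> \<bar>tilt d q e i\<bar> = tilt d q e i"
  by (simp add: tilt_nonneg)

lemma tilt_in_sphere_prim:
  assumes "3 \<le> d" and "1 \<le> q" and "e \<in> offdiag d"
  shows "tilt d q e \<in> sphere_prim d (d * q)"
proof -
  obtain a b where e: "e = (a, b)" "a < d" "b < d" "a \<noteq> b"
    using assms(3) by (auto simp: offdiag_def)
  have "\<not> {..<d} \<subseteq> {a, b}"
    using card_mono[of "{a, b}" "{..<d}"] assms(1) e(4) by auto
  then obtain c where c: "c < d" "c \<noteq> a" "c \<noteq> b" by auto
  have "Gcd (tilt d q e ` {..<d}) dvd tilt d q e a - tilt d q e c"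
    using e(2) c(1) by (intro dvd_diff Gcd_dvd) auto
  then have "Gcd (tilt d q e ` {..<d}) = 1"
    using e c by (simp add: tilt_def)
  moreover have "lead_pos d (tilt d q e)"
    using assms(2) e by (intro lead_pos_nonneg) (auto simp: tilt_nonneg tilt_def intro!: exI[of _ a])
  moreover have "l1norm d (tilt d q e) = (\<Sum>i<d. int q + of_bool (i = a) - of_bool (i = b))"
    unfolding l1norm_def abs_tilt[OF assms(2)] by (simp add: e tilt_def)
  then have "l1norm d (tilt d q e) = int (d * q)"
    using e by (simp add: sum.distrib sum_subtractf of_bool_def)
  ultimately show ?thesis by (simp add: sphere_prim_def prim_pts_iff tilt_def)
qed

lemma inj_on_tilt: "inj_on (tilt d q) (offdiag d)"
proof (rule inj_onI)
  fix e e' assume "e \<in> offdiag d" "e' \<in> offdiag d" and eq: "tilt d q e = tilt d q e'"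
  then obtain a b a' b' where "e = (a, b)" "e' = (a', b')" "a < d" "b < d" "a \<noteq> b" "a' \<noteq> b'"
    by (auto simp: offdiag_def)
  moreover have "tilt d q e a = tilt d q e' a" and "tilt d q e b = tilt d q e' b"
    using eq by simp_all
  ultimately show "e = e'" by (auto simp: tilt_def of_bool_def split: if_splits)
qed

lemma rot_offdiag: "e \<in> offdiag d \<Longrightarrow> (Suc (fst e) mod d, Suc (snd e) mod d) \<in> offdiag d"
  by (auto simp: offdiag_def mod_Suc split: if_splits)

lemma pred_mod_eq_iff: "i < d \<Longrightarrow> a < d \<Longrightarrow> (i + d - 1) mod d = a \<longleftrightarrow> i = Suc a mod d"
  by (auto simp: pred_mod_eq[simplified] mod_Suc)

lemma prim_rot_tilt:
  assumes "1 \<le> q" and "e \<in> offdiag d"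
  shows "prim_rot d (tilt d q e) = tilt d q (Suc (fst e) mod d, Suc (snd e) mod d)"
proof -
  let ?e' = "(Suc (fst e) mod d, Suc (snd e) mod d)"
  obtain a b where e: "e = (a, b)" "a < d" "b < d" using assms(2) by (auto simp: offdiag_def)
  have "coord_rot d (tilt d q e) i = tilt d q ?e' i" for i
    using e by (cases "i < d") (simp_all add: coord_rot_def tilt_def pred_mod_eq_iff[simplified])
  then have rot: "coord_rot d (tilt d q e) = tilt d q ?e'" ..
  have "?e' \<in> offdiag d" using rot_offdiag[OF assms(2)] .
  then have "lead_pos d (tilt d q ?e')"
    using assms(1) by (intro lead_pos_nonneg) (auto simp: tilt_nonneg tilt_def offdiag_def)
  then show ?thesis by (simp add: prim_rot_def sign_norm_def rot)
qed

lemma col_sum_tilt_image: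
  assumes "1 \<le> q" and "E \<subseteq> offdiag d" and "i < d"
  shows "col_sum (tilt d q ` E) i
    = int (card E) * int q + (\<Sum>(a, b)\<in>E. of_bool (a = i) - of_bool (b = i))"
proof -
  have "col_sum (tilt d q ` E) i = (\<Sum>e\<in>E. tilt d q e i)"
    using sum.reindex[OF inj_on_subset[OF inj_on_tilt assms(2)], of "\<lambda>x. \<bar>x i\<bar>"]
    by (simp add: col_sum_def abs_tilt[OF assms(1)])
  also have "\<dots> = (\<Sum>e\<in>E. int q + (case e of (a, b) \<Rightarrow> of_bool (a = i) - of_bool (b = i)))"
    using assms(3) by (intro sum.cong) (auto simp: tilt_def split: prod.splits)
  finally show ?thesis by (simp add: sum.distrib)
qed

lemma balanced_tilt_image:
  assumes "1 \<le> q" and "E \<subseteq> offdiag d" and "circulation E"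
  shows "balanced d q (tilt d q ` E)"
  using assms col_sum_tilt_image[OF assms(1,2)] card_image[OF inj_on_subset[OF inj_on_tilt assms(2)]]
  by (simp add: balanced_def circulation_def)

lemma card_sphere_prim_ge:
  assumes "3 \<le> d" and "1 \<le> q"
  shows "d * (d - 1) \<le> card (sphere_prim d (d * q))"
proof -
  have "tilt d q ` offdiag d \<subseteq> sphere_prim d (d * q)"
    using tilt_in_sphere_prim[OF assms] by blast
  then show ?thesis
    using card_mono[OF finite_sphere_prim] card_image[OF inj_on_tilt] card_offdiag by metis
qed

lemma balanced_sphere_prim: "0 < d \<Longrightarrow> balanced d q (sphere_prim d (d * q))"
  by (rule balanced_if_prim_rot_invariant) (auto simp: finite_sphere_prim prim_rot_sphere_prim)

lemma balanced_subsets_of_sphere_prim: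
  assumes "3 \<le> d" and "1 \<le> q" and "2 \<le> m" and "m + 2 \<le> card (sphere_prim d (d * q))"
  shows "\<exists>Y\<subseteq>sphere_prim d (d * q). card Y = m \<and> balanced d q Y"
proof (rule subsets_of_all_sizes_extend_by_orbits[where f = "prim_rot d" and c = d
      and R = "tilt d q ` offdiag d" and A0 = "sphere_prim d (d * q)"])
  let ?S = "sphere_prim d (d * q)"
  have "0 < d" using assms(1) by simp
  show "finite ?S" "prim_rot d ` ?S \<subseteq> ?S" "0 < d"
    using prim_rot_sphere_prim \<open>0 < d\<close> by (auto simp: finite_sphere_prim)
  show "inj_on (prim_rot d) ?S"
    using inj_on_prim_rot[OF \<open>0 < d\<close>] by (rule inj_on_subset) (auto simp: sphere_prim_def)
  show "(prim_rot d ^^ d) x = x" if "x \<in> ?S" for x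
    using funpow_prim_rot_period[OF \<open>0 < d\<close>] that by (auto simp: sphere_prim_def)
  show "tilt d q ` offdiag d \<subseteq> ?S"
    using tilt_in_sphere_prim[OF assms(1,2)] by blast
  show "prim_rot d ` tilt d q ` offdiag d \<subseteq> tilt d q ` offdiag d"
    using prim_rot_tilt[OF assms(2)] rot_offdiag by fastforce
  have "d + 3 \<le> d * (d - 1)"
    using mult_le_mono1[of 3 d "d - 1"] assms(1) by linarith
  then show card_R: "d + 3 \<le> card (tilt d q ` offdiag d)"
    by (simp add: card_image[OF inj_on_tilt] card_offdiag)
  show "balanced d q Y" if "Y \<subseteq> ?S" "prim_rot d ` Y \<subseteq> Y" for Y
    using that finite_subset[OF that(1) finite_sphere_prim] \<open>0 < d\<close>
    by (intro balanced_if_prim_rot_invariant) auto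
  show "balanced d q (Y \<union> Z)"
    if "Y \<subseteq> ?S" "Z \<subseteq> ?S" "Y \<inter> Z = {}" "balanced d q Y" "balanced d q Z" for Y Z
    using that finite_subset[OF _ finite_sphere_prim] by (intro balanced_Un) auto
  show "\<exists>Y\<subseteq>tilt d q ` offdiag d. card Y = n \<and> balanced d q Y"
    if n: "2 \<le> n" "n + 2 \<le> card (tilt d q ` offdiag d)" for n
  proof -
    obtain E where "E \<subseteq> offdiag d" "card E = n" "circulation E"
      using circulations_of_every_size[OF assms(1) n(1)] n(2)
      by (auto simp: card_image[OF inj_on_tilt] card_offdiag)
    then show ?thesis
      using balanced_tilt_image[OF assms(2)] card_image[OF inj_on_subset[OF inj_on_tilt]]
      by (intro exI[of _ "tilt d q ` E"]) auto
  qed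
qed (use assms in auto)

section \<open>Filling a column budget\<close>

text \<open>Sizes of subsets of a balanced sphere of M points that a budget r on every column sum
  admits; the extra unit for m = 1 and m = M - 1 pays for the unbalanced sets used there.\<close>

definition admissible :: "nat \<Rightarrow> nat \<Rightarrow> int \<Rightarrow> nat \<Rightarrow> bool" where
  "admissible M q r m \<longleftrightarrow> m < M \<and> int m * int q \<le> r \<and> (m = 1 \<longrightarrow> int q < r)
     \<and> (m + 1 = M \<longrightarrow> (int M - 1) * int q < r)"

lemma tilt_bounds: "1 \<le> q \<Longrightarrow> i < d \<Longrightarrow> int q - 1 \<le> tilt d q e i \<and> tilt d q e i \<le> int q + 1"
  by (simp add: tilt_def)

lemma sphere_subset_with_col_sums_le:
  assumes "3 \<le> d" and "1 \<le> q" and adm: "admissible (card (sphere_prim d (d * q))) q r m"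
  shows "\<exists>Y\<subseteq>sphere_prim d (d * q). card Y = m \<and> (\<forall>i<d. col_sum Y i \<le> r)"
proof -
  let ?S = "sphere_prim d (d * q)"
  let ?M = "card ?S"
  let ?x = "tilt d q (0, 1)"
  have x: "?x \<in> ?S" using tilt_in_sphere_prim[OF assms(1,2)] assms(1) by (simp add: offdiag_def)
  have "0 \<le> r" using adm order_trans[of 0 "int m * int q" r] by (simp add: admissible_def)
  consider "m = 0" | "m = 1" | "m + 1 = ?M" | "2 \<le> m" "m + 2 \<le> ?M"
    using adm by (force simp: admissible_def)
  then show ?thesis
  proof cases
    case 1
    then show ?thesis using \<open>0 \<le> r\<close> by (auto simp: col_sum_def)
  next
    case 2
    have "col_sum {?x} i \<le> r" if "i < d" for i
      using adm 2 tilt_bounds[OF assms(2) that, of "(0, 1)"]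
      by (simp add: admissible_def col_sum_def abs_tilt[OF assms(2)])
    then show ?thesis using x \<open>m = 1\<close> by (intro exI[of _ "{?x}"]) auto
  next
    case 3
    have "col_sum (?S - {?x}) i \<le> r" if "i < d" for i
    proof -
      have "col_sum ?S i = \<bar>?x i\<bar> + col_sum (?S - {?x}) i"
        unfolding col_sum_def using finite_sphere_prim x by (rule sum.remove)
      moreover have "col_sum ?S i = int ?M * int q"
        using balanced_sphere_prim[of d q] assms(1) that by (simp add: balanced_def)
      ultimately show ?thesis
        using adm 3 tilt_bounds[OF assms(2) that, of "(0, 1)"]
        by (simp add: admissible_def algebra_simps abs_tilt[OF assms(2)])
    qed
    moreover have "card (?S - {?x}) = m" using 3 x finite_sphere_prim by simp
    ultimately show ?thesis by (intro exI[of _ "?S - {?x}"]) auto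
  next
    case 4
    then obtain Y where "Y \<subseteq> ?S" "card Y = m" "balanced d q Y"
      using balanced_subsets_of_sphere_prim[OF assms(1,2)] by blast
    then show ?thesis using adm by (intro exI[of _ Y]) (auto simp: balanced_def admissible_def)
  qed
qed

lemma admissible_div:
  fixes q M :: nat and r :: int
  assumes "0 < q" and "0 \<le> r" and "r < int M * int q" and "4 \<le> M"
  shows "r \<noteq> int q \<Longrightarrow> r \<noteq> (int M - 1) * int q \<Longrightarrow> admissible M q r (nat (r div int q))"
    and "r = int q \<or> r = (int M - 1) * int q \<Longrightarrow>
           1 \<le> r div int q \<and> admissible M q r (nat (r div int q) - 1)"
proof -
  define m where "m = r div int q"
  have "m * int q + r mod int q = r" unfolding m_def by (rule div_mult_mod_eq)
  moreover have "0 \<le> r mod int q" "r mod int q < int q" using assms(1) by simp_all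
  ultimately have m: "m * int q \<le> r" "r < (m + 1) * int q" by (auto simp: algebra_simps)
  have "0 \<le> m" using assms(1,2) by (simp add: m_def pos_imp_zdiv_nonneg_iff)
  have "m * int q < int M * int q" using m(1) assms(3) by linarith
  then have "m < int M" using assms(1) by (simp add: mult_less_cancel_right)
  show "admissible M q r (nat m)" if "r \<noteq> int q" "r \<noteq> (int M - 1) * int q"
  proof -
    have "q < r" if "m = 1" using m(1) \<open>r \<noteq> int q\<close> that by simp
    moreover have "(int M - 1) * int q < r" if "m + 1 = int M"
    proof -
      have "m = int M - 1" using that by simp
      then have "(int M - 1) * int q \<le> r" using m(1) by simp
      then show ?thesis using \<open>r \<noteq> (int M - 1) * int q\<close> by simp
    qed
    ultimately show ?thesis
      using m(1) \<open>0 \<le> m\<close> \<open>m < int M\<close> by (auto simp: admissible_def)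
  qed
  show "1 \<le> m \<and> admissible M q r (nat m - 1)" if "r = int q \<or> r = (int M - 1) * int q"
    using that
  proof
    assume "r = int q"
    then have "m = 1" using assms(1) by (simp add: m_def)
    then show ?thesis using assms(2,4) by (simp add: admissible_def)
  next
    assume r: "r = (int M - 1) * int q"
    then have "m = int M - 1" using assms(1) by (simp add: m_def)
    moreover have "(int M - 2) * int q \<le> r" using r assms(1) by (simp add: mult_right_mono)
    ultimately show ?thesis using assms(4) by (auto simp: admissible_def nat_diff_distrib)
  qed
qed

lemma kappa_p_gt:
  assumes "2 \<le> d"
  shows "int k < kappa_p d (k + 2)"
proof -
  define x where "x = (\<lambda>i::nat. if i = 0 then 1 else if i = 1 then int (k + 1) else 0)"
  have "Gcd (x ` {..<d}) dvd x 0" using assms by (intro Gcd_dvd) auto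
  then have "Gcd (x ` {..<d}) = 1" by (simp add: x_def)
  moreover have "l1norm d x = (\<Sum>i\<in>{0, 1}. \<bar>x i\<bar>)"
    unfolding l1norm_def using assms by (intro sum.mono_neutral_right) (auto simp: x_def)
  ultimately have x: "x \<in> ball_prim d (k + 2)"
    using assms by (auto simp: ball_prim_def prim_pts_def x_def)
  have "int k < \<bar>x 1\<bar>" by (simp add: x_def)
  also have "\<dots> \<le> col_sum (ball_prim d (k + 2)) 1"
    unfolding col_sum_def by (intro member_le_sum[OF x]) (auto simp: finite_ball_prim)
  also have "\<dots> \<le> kappa_p d (k + 2)"
    unfolding kappa_p_def kappa_eq_Max_col_sum using assms by (intro Max_ge) auto
  finally show ?thesis .
qed

lemma kappa_p_least_level:
  assumes "p = (LEAST q. 0 < q \<and> int k < kappa_p d q)" and "2 \<le> d"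
  shows "0 < p" and "int k < kappa_p d p" and "1 < p \<Longrightarrow> kappa_p d (p - 1) \<le> int k"
proof -
  have "0 < k + 2 \<and> int k < kappa_p d (k + 2)" using kappa_p_gt[OF assms(2)] by simp
  then show "0 < p" and "int k < kappa_p d p"
    unfolding assms(1) by (metis (mono_tags, lifting) LeastI)+
  show "kappa_p d (p - 1) \<le> int k" if "1 < p"
    using not_less_Least[of "p - 1" "\<lambda>q. 0 < q \<and> int k < kappa_p d q"] that
    by (simp flip: assms(1))
qed

lemma kappa_p_mult_eq:
  assumes "0 < d" and "0 < q"
  shows "kappa_p d (d * q) = kappa_p d (d * q - 1) + int (card (sphere_prim d (d * q))) * int q"
  using ball_prim_eq_Un_sphere[of "d * q" d] assms balanced_sphere_prim[OF assms(1)]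
  by (simp add: kappa_p_def kappa_Un_balanced finite_ball_prim finite_sphere_prim)

lemma floor_lam_eq:
  assumes "0 < d" and "p = d * q"
  shows "\<lfloor>lam d k p\<rfloor> = int (N_p d (p - 1)) + (int k - kappa_p d (p - 1)) div int q"
proof -
  have "lam d k p = of_int (int (N_p d (p - 1))) + of_int (int k - kappa_p d (p - 1)) / of_int (int q)"
    using assms by (simp add: lam_def)
  then show ?thesis by (simp only: int_add_floor[symmetric] floor_divide_of_int_eq)
qed

lemma prim_set_of_card:
  assumes "3 \<le> d" and "1 \<le> q" and "p = d * q"
    and "admissible (card (sphere_prim d p)) q (int k - kappa_p d (p - 1)) m"
  shows "\<exists>X. X \<subseteq> prim_pts d \<and> finite X \<and> kappa d X \<le> int k
           \<and> int (card X) = int (N_p d (p - 1)) + int m"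
proof -
  let ?B = "ball_prim d (p - 1)"
  obtain Y where Y: "Y \<subseteq> sphere_prim d p" "card Y = m"
      "\<forall>i<d. col_sum Y i \<le> int k - kappa_p d (p - 1)"
    using sphere_subset_with_col_sums_le[OF assms(1,2)] assms(3,4) by blast
  have "finite Y" using Y(1) finite_subset finite_sphere_prim by blast
  have "0 < p" using assms(1-3) by simp
  have disj: "?B \<inter> Y = {}" using ball_prim_eq_Un_sphere(2)[OF \<open>0 < p\<close>] Y(1) by blast
  have "col_sum (?B \<union> Y) i \<le> int k" if "i < d" for i
  proof -
    have "col_sum ?B i \<le> kappa_p d (p - 1)"
      unfolding kappa_p_def kappa_eq_Max_col_sum using that by (intro Max_ge) auto
    moreover have "col_sum Y i \<le> int k - kappa_p d (p - 1)" using Y(3) that by blast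
    ultimately show ?thesis
      using col_sum_Un[OF finite_ball_prim \<open>finite Y\<close> disj] by simp
  qed
  moreover have "{..<d} \<noteq> {}" using assms(1) by (simp add: lessThan_empty_iff)
  ultimately have "kappa d (?B \<union> Y) \<le> int k"
    unfolding kappa_eq_Max_col_sum by (simp add: Max_le_iff)
  moreover have "?B \<union> Y \<subseteq> prim_pts d"
    using Y(1) by (auto simp: ball_prim_def sphere_prim_def)
  moreover have "card (?B \<union> Y) = N_p d (p - 1) + m"
    using card_Un_disjoint[OF finite_ball_prim \<open>finite Y\<close> disj] Y(2) by (simp add: N_p_def)
  ultimately show ?thesis
    using \<open>finite Y\<close> finite_ball_prim by (intro exI[of _ "?B \<union> Y"]) auto
qed

lemma prim_sets_of_level:
  assumes "3 \<le> d" and "1 \<le> q" and p: "p = d * q"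
    and "kappa_p d (p - 1) \<le> int k" and "int k < kappa_p d p"
  defines "r \<equiv> int k - kappa_p d (p - 1)" and "M \<equiv> card (sphere_prim d p)"
  shows "r \<noteq> int q \<and> r \<noteq> (int M - 1) * int q \<Longrightarrow> \<exists>X. X \<subseteq> prim_pts d \<and> finite X
           \<and> kappa d X \<le> int k \<and> int (card X) = int (N_p d (p - 1)) + r div int q"
    and "\<not> (r \<noteq> int q \<and> r \<noteq> (int M - 1) * int q) \<Longrightarrow> \<exists>X. X \<subseteq> prim_pts d \<and> finite X
           \<and> kappa d X \<le> int k \<and> int (card X) = int (N_p d (p - 1)) + r div int q - 1"
proof -
  have "kappa_p d p = kappa_p d (p - 1) + int M * int q"
    using kappa_p_mult_eq[of d q] assms(1,2) by (simp add: M_def p)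
  then have r: "0 \<le> r" "r < int M * int q" using assms(4,5) by (simp_all add: r_def)
  have "4 \<le> M"
    using card_sphere_prim_ge[OF assms(1,2)] mult_le_mono[of 3 d 2 "d - 1"] assms(1)
    unfolding M_def p by linarith
  note div = admissible_div[of q r M, OF _ r \<open>4 \<le> M\<close>]
  note build = prim_set_of_card[OF assms(1,2) p, of k, folded r_def M_def]
  have "0 \<le> r div int q" using r(1) assms(2) by (simp add: pos_imp_zdiv_nonneg_iff)
  show "\<exists>X. X \<subseteq> prim_pts d \<and> finite X
          \<and> kappa d X \<le> int k \<and> int (card X) = int (N_p d (p - 1)) + r div int q"
    if "r \<noteq> int q \<and> r \<noteq> (int M - 1) * int q"
    using build[OF div(1)] that assms(2) \<open>0 \<le> r div int q\<close> by simp
  show "\<exists>X. X \<subseteq> prim_pts d \<and> finite X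
          \<and> kappa d X \<le> int k \<and> int (card X) = int (N_p d (p - 1)) + r div int q - 1"
    if "\<not> (r \<noteq> int q \<and> r \<noteq> (int M - 1) * int q)"
    using build[OF conjunct2[OF div(2)]] conjunct1[OF div(2)] that assms(2) by (simp add: algebra_simps)
qed

theorem lemma4p3:
  fixes d k p :: nat
  assumes "d > 2" and "k > 0"
    and "p = (LEAST q. 0 < q \<and> int k < kappa_p d q)"
    and "d dvd p"
  shows "(int k - kappa_p d (p - 1) \<noteq> int (p div d) \<and> kappa_p d p - int k \<noteq> int (p div d)
           \<longrightarrow> (\<exists>X. X \<subseteq> prim_pts d \<and> finite X \<and> kappa d X \<le> int k \<and>
                    int (card X) = \<lfloor>lam d k p\<rfloor>))
       \<and> (\<not> (int k - kappa_p d (p - 1) \<noteq> int (p div d) \<and> kappa_p d p - int k \<noteq> int (p div d))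
           \<longrightarrow> (\<exists>X. X \<subseteq> prim_pts d \<and> finite X \<and> kappa d X \<le> int k \<and>
                    int (card X) = \<lfloor>lam d k p\<rfloor> - 1))"
proof -
  obtain q where p: "p = d * q" using assms(4) by blast
  have "0 < p" and k_less: "int k < kappa_p d p"
    using kappa_p_least_level[OF assms(3)] assms(1) by auto
  have "d \<le> p" using assms(4) \<open>0 < p\<close> by (rule dvd_imp_le)
  then have k_ge: "kappa_p d (p - 1) \<le> int k"
    using kappa_p_least_level(3)[OF assms(3)] assms(1) by simp
  have q: "1 \<le> q" "p div d = q" using \<open>0 < p\<close> assms(1) p by auto
  have "kappa_p d p - int k = int q
      \<longleftrightarrow> int k - kappa_p d (p - 1) = (int (card (sphere_prim d p)) - 1) * int q"
    using kappa_p_mult_eq[of d q] assms(1) q(1) by (auto simp: p algebra_simps)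
  then show ?thesis
    using prim_sets_of_level[OF _ q(1) p k_ge k_less] floor_lam_eq[of d p q k] assms(1) p q(2)
    by auto
qed

end
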